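(* Let $d>K\ge1$, $\mathbf Q\in\mathrm{St}(d,K)$, $\lambda_1>\dots>\lambda_K>0$, $\boldsymbol\Theta=\mathrm{diag}(\sqrt{\lambda_1},\dots,\sqrt{\lambda_K})$, $a_1>\dots>a_K>0$, $\alpha>0$, and $\mathcal A_\alpha(\mathbf X)=\alpha\mathbf X+\mathbf Q\boldsymbol\Theta^2\mathbf Q^\top\mathbf X\,\mathrm{diag}(a_1,\dots,a_K)$. A point $\mathbf X\in\mathrm{St}(d,K)$ is a fixed point of the iteration $\mathbf X^{t+1}\in\mathcal P_{\mathrm{St}}(\mathcal A_\alpha(\mathbf X^t))$ (i.e., $\mathbf X\in\mathcal P_{\mathrm{St}}(\mathcal A_\alpha(\mathbf X))$) if and only if $\mathrm{tr}(\mathbf X^\top\mathcal A_\alpha(\mathbf X))=\|\mathcal A_\alpha(\mathbf X)\|_*$. Furthermore, every such fixed point is a first-order critical point of $\max_{\mathbf X\in\mathrm{St}(d,K)}\mathrm{tr}(\mathbf X^\top\mathbf Q\boldsymbol\Theta^2\mathbf Q^\top\mathbf X\,\mathrm{diag}(a_1,\dots,a_K))$.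
   Context: $\mathrm{St}(d,K)=\{\mathbf X\in\mathbb R^{d\times K}:\mathbf X^\top\mathbf X=\mathbf I_K\}$, viewed as an embedded submanifold of $\mathbb R^{d\times K}$ with the Euclidean metric (critical point = vanishing Riemannian gradient). $\mathcal P_{\mathrm{St}}(\mathbf Y)$ is the set of Frobenius-nearest points of $\mathrm{St}(d,K)$ to $\mathbf Y$. $\|\cdot\|_*$ is the nuclear norm. *)

theory Defs
  imports "HOL-Analysis.Analysis"
begin

text \<open>Matrices in R^{d x K} are rendered as real^'k^'d (rows indexed by 'd, columns by 'k).
  The norm on real^'k^'d is the Frobenius norm.\<close>

definition stiefel :: "(real^'k^'d) set" where
  "stiefel = {X. transpose X ** X = mat 1}"

definition diagm :: "real^'n \<Rightarrow> real^'n^'n" where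
  "diagm v = (\<chi> i j. if i = j then v $ i else 0)"

definition proj_stiefel :: "real^'k^'d \<Rightarrow> (real^'k^'d) set" where
  "proj_stiefel Y = {X \<in> stiefel. \<forall>Z \<in> stiefel. norm (Y - X) \<le> norm (Y - Z)}"

definition nuclear_norm :: "real^'k^'d \<Rightarrow> real" where
  "nuclear_norm Y = trace (THE S :: real^'k^'k. transpose S = S \<and> (\<forall>x. 0 \<le> x \<bullet> (S *v x))
                           \<and> S ** S = transpose Y ** Y)"

text \<open>First-order critical point of f on the Stiefel manifold (embedded, Euclidean metric):
  X is on St and the differential of f at X vanishes on the tangent space
  T_X St = {V. X^T V + V^T X = 0}, i.e. the Riemannian gradient vanishes.\<close>
definition stiefel_critical :: "(real^'k^'d \<Rightarrow> real) \<Rightarrow> real^'k^'d \<Rightarrow> bool" where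
  "stiefel_critical f X \<longleftrightarrow> X \<in> stiefel \<and>
     (\<exists>f'. (f has_derivative f') (at X) \<and>
        (\<forall>V. transpose X ** V + transpose V ** X = 0 \<longrightarrow> f' V = 0))"

end

theory Submission
  imports Defs
begin

text \<open>All points of the Stiefel manifold have Frobenius norm \<open>sqrt K\<close>, so \<open>X\<close> is a nearest point
  to \<open>Y\<close> exactly when it maximises \<open>\<langle>Z, Y\<rangle>\<close> over the manifold. Diagonalising
  \<open>Y\<^sup>T Y = U diag(\<sigma>\<^sup>2) U\<^sup>T\<close>, Cauchy-Schwarz on the vectors \<open>Y u\<^sub>p\<close> bounds \<open>\<langle>Z, Y\<rangle>\<close> by
  \<open>\<Sum> \<sigma>\<^sub>p = \<parallel>Y\<parallel>\<^sub>*\<close>, and completing the normalised \<open>Y u\<^sub>p\<close> to an orthonormal \<open>K\<close>-frame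
  (here \<open>K \<le> d\<close> is needed) attains the bound.

  A maximiser \<open>X\<close> of \<open>\<langle>\<cdot>, M\<rangle>\<close> gains nothing by rotating two of its columns into each other, or
  one column towards a unit vector orthogonal to all of them. To first order this makes
  \<open>X\<^sup>T M\<close> symmetric and \<open>M = X X\<^sup>T M\<close>, so \<open>M\<close> is orthogonal to the tangent space
  \<open>{V. X\<^sup>T V + V\<^sup>T X = 0}\<close>. For \<open>M = \<A>\<^sub>\<alpha>(X) = \<alpha> X + B X D\<close>, with \<open>B = Q \<Theta>\<^sup>2 Q\<^sup>T\<close> and
  \<open>D = diag(a)\<close> symmetric, \<open>X\<close> itself is normal, hence so is \<open>B X D\<close>, which is half the gradient
  of \<open>tr(Y\<^sup>T B Y D)\<close>.\<close>

definition matrix_of_columns :: "('k \<Rightarrow> real^'d) \<Rightarrow> real^'k^'d" where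
  "matrix_of_columns w = (\<chi> r p. w p $ r)"

definition orthonormal_on :: "'i set \<Rightarrow> ('i \<Rightarrow> 'v::real_inner) \<Rightarrow> bool" where
  "orthonormal_on J u \<longleftrightarrow> (\<forall>p\<in>J. \<forall>q\<in>J. inner (u p) (u q) = (if p = q then 1 else 0))"

lemma column_matrix_of_columns [simp]: "column p (matrix_of_columns w) = w p"
  by (simp add: column_def matrix_of_columns_def vec_eq_iff)

lemma matrix_eq_columnsI: "(\<And>p. column p X = column p Y) \<Longrightarrow> X = Y"
  by (simp add: column_def vec_eq_iff)

lemma column_matrix_mult: "column p (A ** X) = A *v column p X"
  by (simp add: column_def matrix_matrix_mult_def matrix_vector_mult_def)

lemma column_mult_diagm: "column p (X ** diagm v) = v $ p *\<^sub>R column p X"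
  by (simp add: column_def diagm_def matrix_matrix_mult_def vec_eq_iff if_distrib sum.delta'
      cong: if_cong)

lemma transpose_mult_nth: "(transpose X ** Y) $ p $ q = inner (column p X) (column q Y)"
  by (simp add: matrix_matrix_mult_def transpose_def column_def inner_vec_def)

lemma inner_matrix_columns:
  fixes X Y :: "real^'k^'d"
  shows "inner X Y = (\<Sum>p\<in>UNIV. inner (column p X) (column p Y))"
proof -
  have "inner X Y = (\<Sum>r\<in>UNIV. \<Sum>p\<in>UNIV. X$r$p * Y$r$p)"
    by (simp add: inner_vec_def)
  also have "\<dots> = (\<Sum>p\<in>UNIV. \<Sum>r\<in>UNIV. X$r$p * Y$r$p)"
    by (rule sum.swap)
  finally show ?thesis
    by (simp add: inner_vec_def column_def)
qed

lemma inner_matrix_eq_trace: "inner X Y = trace (transpose X ** Y)"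
  by (simp add: trace_def transpose_mult_nth inner_matrix_columns)

lemma inner_matrix_vector_transpose: "inner x (A *v y) = inner (transpose A *v x) (y :: real^_)"
  by (simp add: dot_lmul_matrix)

lemma inner_matrix_vector_mult_both:
  "inner (A *v x) (A *v y) = inner x ((transpose A ** A) *v (y :: real^_))"
  by (metis inner_commute inner_matrix_vector_transpose matrix_vector_mul_assoc)

lemma inner_matrix_mult_left:
  fixes M :: "real^'k^'d"
  shows "inner M (A ** N) = inner (transpose A ** M) N"
  by (simp add: inner_matrix_eq_trace matrix_transpose_mul matrix_mul_assoc)

lemma inner_matrix_mult_right:
  fixes M :: "real^'k^'d"
  shows "inner M (N ** C) = inner (M ** transpose C) N"
proof -
  have "trace ((transpose M ** N) ** C) = trace (C ** (transpose M ** N))"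
    by (rule trace_mul_sym)
  then show ?thesis
    by (simp add: inner_matrix_eq_trace matrix_transpose_mul matrix_mul_assoc)
qed

lemma matrix_add_rdistrib: "(A + B) ** C = A ** C + B ** (C :: real^_^_)"
  by (simp add: matrix_matrix_mult_def vec_eq_iff sum.distrib algebra_simps)

lemma transpose_diagm [simp]: "transpose (diagm v) = diagm v"
  by (simp add: diagm_def transpose_def vec_eq_iff)

lemma trace_transpose: "trace (transpose A) = trace A"
  by (simp add: trace_def transpose_def)

lemma stiefel_iff_orthonormal_columns: "X \<in> stiefel \<longleftrightarrow> orthonormal_on UNIV (\<lambda>p. column p X)"
  by (simp add: stiefel_def orthonormal_on_def vec_eq_iff transpose_mult_nth mat_def)

lemma matrix_of_columns_in_stiefel [simp]: "matrix_of_columns w \<in> stiefel \<longleftrightarrow> orthonormal_on UNIV w"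
  by (simp add: stiefel_iff_orthonormal_columns)

lemma inner_stiefel_mult:
  assumes "Z \<in> stiefel"
  shows "inner (Z *v x) (Z *v y) = inner x y"
  using assms by (simp add: inner_matrix_vector_mult_both stiefel_def)

lemma norm_stiefel_mult: "Z \<in> stiefel \<Longrightarrow> norm (Z *v x) = norm x"
  by (simp add: norm_eq_sqrt_inner inner_stiefel_mult)

lemma inner_stiefel_self: "Z \<in> stiefel \<Longrightarrow> inner Z Z = real CARD('k)" for Z :: "real^'k^'d"
  by (simp add: inner_matrix_eq_trace stiefel_def trace_I)

lemma orthonormal_on_insert:
  assumes "orthonormal_on J u" "j \<notin> J" "norm v = 1" "\<forall>p\<in>J. inner (u p) v = 0"
  shows "orthonormal_on (insert j J) (u(j := v))"
proof -
  have "inner v v = 1"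
    using assms(3) by (simp add: dot_square_norm)
  then show ?thesis
    using assms unfolding orthonormal_on_def by (auto simp: inner_commute)
qed

lemma exists_unit_orthogonal_to_family:
  fixes w :: "'i \<Rightarrow> real^'n"
  assumes "finite J" "card J < CARD('n)"
  obtains x where "norm x = 1" "\<forall>p\<in>J. inner (w p) x = 0"
proof -
  have "dim (w ` J) \<le> card J"
    using assms(1) by (meson card_image_le dim_le_card' finite_imageI order_trans)
  then have "dim (w ` J) < DIM(real^'n)"
    using assms(2) by simp
  then obtain x where "x \<noteq> 0" "\<forall>y\<in>span (w ` J). orthogonal x y"
    by (metis orthogonal_to_subspace_exists)
  then have "norm (x /\<^sub>R norm x) = 1" "\<forall>p\<in>J. inner (w p) (x /\<^sub>R norm x) = 0"
    by (auto simp: orthogonal_def inner_commute span_base)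
  then show ?thesis
    using that by blast
qed

lemma orthonormal_on_extend:
  fixes w :: "'k::finite \<Rightarrow> real^'n"
  assumes "CARD('k) \<le> CARD('n)" "orthonormal_on P w"
  obtains w' where "\<forall>p\<in>P. w' p = w p" "orthonormal_on UNIV w'"
proof -
  have "\<exists>w'. (\<forall>p\<in>P. w' p = w p) \<and> orthonormal_on (P \<union> J) w'" for J
  proof (induction J rule: finite_induct[OF finite])
    case 1
    then show ?case
      using assms(2) by auto
  next
    case (2 j J)
    then obtain w' where w': "\<forall>p\<in>P. w' p = w p" "orthonormal_on (P \<union> J) w'"
      by (elim exE conjE)
    show ?case
    proof (cases "j \<in> P \<union> J")
      case True
      then have "P \<union> insert j J = P \<union> J"
        by auto
      then show ?thesis
        using w' by auto
    next
      case False
      then have "card (P \<union> J) < CARD('k)"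
        by (intro psubset_card_mono) auto
      then have "card (P \<union> J) < CARD('n)"
        using assms(1) by linarith
      then obtain x where "norm x = 1" "\<forall>p\<in>P \<union> J. inner (w' p) x = 0"
        using exists_unit_orthogonal_to_family[OF finite] by metis
      then have "orthonormal_on (P \<union> insert j J) (w'(j := x))"
        using orthonormal_on_insert[OF w'(2) False] by simp
      moreover have "\<forall>p\<in>P. (w'(j := x)) p = w p"
        using w'(1) False by auto
      ultimately show ?thesis
        by (intro exI[of _ "w'(j := x)"] conjI)
    qed
  qed
  from this[of UNIV] obtain w' where "\<forall>p\<in>P. w' p = w p" "orthonormal_on UNIV w'"
    by auto
  then show ?thesis
    by (rule that)
qed

lemma inner_symmetric_matrix: "transpose A = A \<Longrightarrow> inner x (A *v y) = inner (A *v x) (y :: real^_)"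
  by (metis inner_matrix_vector_transpose)

text \<open>A maximiser of the Rayleigh quotient on the unit sphere of the orthogonal complement
  of the given eigenvectors is again an eigenvector.\<close>
lemma symmetric_matrix_eigenvector_orthogonal_to_family:
  fixes A :: "real^'n^'n" and u :: "'i \<Rightarrow> real^'n"
  assumes sym: "transpose A = A" and "finite J" "card J < CARD('n)"
    and eigen: "\<forall>p\<in>J. A *v u p = \<mu> p *\<^sub>R u p"
  obtains v c where "norm v = 1" "\<forall>p\<in>J. inner (u p) v = 0" "A *v v = c *\<^sub>R v"
proof -
  define W where "W = sphere (0::real^'n) 1 \<inter> {x. \<forall>p\<in>J. inner (u p) x = 0}"
  obtain x where "norm x = 1" "\<forall>p\<in>J. inner (u p) x = 0"
    using exists_unit_orthogonal_to_family[OF assms(2,3)] by metis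
  then have "W \<noteq> {}"
    by (auto simp: W_def)
  moreover have "compact W"
    unfolding W_def Collect_ball_eq
    by (intro compact_Int_closed compact_sphere closed_INT ballI closed_hyperplane)
  moreover have "continuous_on W (\<lambda>x. inner x (A *v x))"
    by (intro continuous_intros linear_continuous_on matrix_vector_mul_bounded_linear)
  ultimately obtain v where "v \<in> W" and v_max: "\<forall>y\<in>W. inner y (A *v y) \<le> inner v (A *v v)"
    using continuous_attains_sup by blast
  then have v: "norm v = 1" "\<forall>p\<in>J. inner (u p) v = 0"
    by (auto simp: W_def)
  have first_order: "inner w (A *v v) = 0"
    if w: "norm w = 1" "inner v w = 0" "\<forall>p\<in>J. inner (u p) w = 0" for w
  proof -
    define q where "q t = cos t ^ 2 * inner v (A *v v) + 2 * (sin t * cos t) * inner w (A *v v)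
      + sin t ^ 2 * inner w (A *v w)" for t
    have q_max: "q t \<le> q 0" for t
    proof -
      define y where "y = cos t *\<^sub>R v + sin t *\<^sub>R w"
      have "inner y y = cos t ^ 2 * inner v v + 2 * (sin t * cos t) * inner v w
          + sin t ^ 2 * inner w w"
        by (simp add: y_def inner_add_left inner_add_right inner_commute algebra_simps
            power2_eq_square)
      then have "norm y = 1"
        using v(1) w by (simp add: dot_square_norm norm_eq_1)
      then have "y \<in> W"
        using v(2) w(3) by (simp add: W_def y_def inner_add_right)
      moreover have "inner y (A *v y) = q t"
        using inner_symmetric_matrix[OF sym, of v w]
        by (simp add: y_def q_def matrix_vector_right_distrib matrix_vector_mult_scaleR
            inner_add_left inner_add_right inner_commute algebra_simps power2_eq_square)
      ultimately have "q t \<le> inner v (A *v v)"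
        using v_max by metis
      then show ?thesis
        by (simp add: q_def)
    qed
    have q_deriv: "DERIV q 0 :> 2 * inner w (A *v v)"
      unfolding q_def by (auto intro!: derivative_eq_intros)
    have "2 * inner w (A *v v) = 0"
      by (rule DERIV_local_max[OF q_deriv, where d = 1]) (simp_all add: q_max)
    then show ?thesis
      by simp
  qed
  define r where "r = A *v v - inner v (A *v v) *\<^sub>R v"
  have "r = 0"
  proof (rule ccontr)
    assume "r \<noteq> 0"
    have "inner (u p) r = 0" if "p \<in> J" for p
    proof -
      have "inner (u p) (A *v v) = inner (A *v u p) v"
        by (rule inner_symmetric_matrix[OF sym])
      also have "\<dots> = 0"
        using v(2) that eigen by simp
      finally show ?thesis
        using v(2) that by (simp add: r_def inner_diff_right)
    qed
    moreover have "inner v r = 0"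
      using v(1) by (simp add: r_def inner_diff_right dot_square_norm)
    ultimately have "inner (r /\<^sub>R norm r) (A *v v) = 0"
      using \<open>r \<noteq> 0\<close> by (intro first_order) auto
    moreover have "inner r (A *v v) = inner r r"
      using \<open>inner v r = 0\<close> unfolding r_def
      by (simp add: inner_diff_left inner_diff_right inner_commute)
    ultimately show False
      using \<open>r \<noteq> 0\<close> by simp
  qed
  then show ?thesis
    using that v by (simp add: r_def)
qed

lemma symmetric_matrix_orthonormal_eigenbasis:
  fixes A :: "real^'n^'n"
  assumes "transpose A = A"
  obtains u :: "'n \<Rightarrow> real^'n" and \<mu> :: "real^'n"
  where "orthonormal_on UNIV u" "\<And>p. A *v u p = \<mu> $ p *\<^sub>R u p"
proof -
  have "\<exists>u \<mu>. orthonormal_on J u \<and> (\<forall>p\<in>J. A *v u p = \<mu> p *\<^sub>R u p)" for J :: "'n set"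
  proof (induction J rule: finite_induct[OF finite])
    case 1
    then show ?case
      by (simp add: orthonormal_on_def)
  next
    case (2 j J)
    then obtain u \<mu> where u: "orthonormal_on J u" "\<forall>p\<in>J. A *v u p = \<mu> p *\<^sub>R u p"
      by (elim exE conjE)
    have "card J < CARD('n)"
      using 2 by (intro psubset_card_mono) auto
    then obtain v c where v: "norm v = 1" "\<forall>p\<in>J. inner (u p) v = 0" "A *v v = c *\<^sub>R v"
      using symmetric_matrix_eigenvector_orthogonal_to_family[OF assms 2(1) _ u(2)] by metis
    then have "orthonormal_on (insert j J) (u(j := v))"
      using orthonormal_on_insert[OF u(1) 2(2)] by simp
    moreover have "\<forall>p\<in>insert j J. A *v (u(j := v)) p = (\<mu>(j := c)) p *\<^sub>R (u(j := v)) p"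
      using u(2) v(3) 2(2) by auto
    ultimately show ?case
      by (intro exI[of _ "u(j := v)"] exI[of _ "\<mu>(j := c)"] conjI)
  qed
  from this[of UNIV] show ?thesis
    using that by (metis UNIV_I vec_lambda_beta)
qed

lemma orthonormal_basis_matrix:
  fixes u :: "'n \<Rightarrow> real^'n"
  assumes "orthonormal_on UNIV u"
  shows "transpose (matrix_of_columns u) ** matrix_of_columns u = mat 1"
    and "matrix_of_columns u ** transpose (matrix_of_columns u) = mat 1"
proof -
  have "matrix_of_columns u \<in> stiefel"
    using assms by simp
  then show "transpose (matrix_of_columns u) ** matrix_of_columns u = mat 1"
    by (simp add: stiefel_def)
  then show "matrix_of_columns u ** transpose (matrix_of_columns u) = mat 1"
    by (simp add: matrix_left_right_inverse)
qed

lemma matrix_eq_on_orthonormal_basis: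
  fixes M N :: "real^'n^'m" and u :: "'n \<Rightarrow> real^'n"
  assumes "orthonormal_on UNIV u" "\<And>p. M *v u p = N *v u p"
  shows "M = N"
proof -
  let ?U = "matrix_of_columns u"
  have "M ** ?U = N ** ?U"
    using assms(2) by (intro matrix_eq_columnsI) (simp add: column_matrix_mult)
  then have "M ** (?U ** transpose ?U) = N ** (?U ** transpose ?U)"
    by (simp add: matrix_mul_assoc)
  then show ?thesis
    using orthonormal_basis_matrix(2)[OF assms(1)] by simp
qed

lemma inner_matrix_orthonormal_basis:
  fixes Z Y :: "real^'n^'m" and u :: "'n \<Rightarrow> real^'n"
  assumes "orthonormal_on UNIV u"
  shows "inner Z Y = (\<Sum>p\<in>UNIV. inner (Z *v u p) (Y *v u p))"
proof -
  let ?U = "matrix_of_columns u"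
  have "inner (Z ** ?U) (Y ** ?U) = inner Z Y"
    using orthonormal_basis_matrix(2)[OF assms]
    by (simp add: inner_matrix_mult_right flip: matrix_mul_assoc)
  then show ?thesis
    by (simp add: inner_matrix_columns column_matrix_mult)
qed

lemma diagm_mult_vector: "diagm v *v x = (\<chi> i. v $ i * x $ i)"
  by (simp add: diagm_def matrix_vector_mult_def vec_eq_iff if_distrib if_distribR sum.delta
      cong: if_cong)

lemma conjugate_diagm_psd:
  assumes "\<forall>i. 0 \<le> \<sigma> $ i"
  shows "0 \<le> inner x ((U ** diagm \<sigma> ** transpose U) *v (x :: real^_))"
proof -
  have "inner x ((U ** diagm \<sigma> ** transpose U) *v x)
      = inner (transpose U *v x) (diagm \<sigma> *v (transpose U *v x))"
    by (simp add: inner_matrix_vector_transpose[of x U] flip: matrix_vector_mul_assoc)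
  also have "\<dots> = (\<Sum>i\<in>UNIV. \<sigma> $ i * ((transpose U *v x) $ i)\<^sup>2)"
    by (simp add: diagm_mult_vector inner_vec_def power2_eq_square algebra_simps)
  also have "\<dots> \<ge> 0"
    using assms by (intro sum_nonneg mult_nonneg_nonneg) auto
  finally show ?thesis .
qed

lemma trace_conjugate_diagm:
  fixes U :: "real^'n^'n"
  assumes "transpose U ** U = mat 1"
  shows "trace (U ** diagm \<sigma> ** transpose U) = (\<Sum>i\<in>UNIV. \<sigma> $ i)"
proof -
  have "trace (U ** (diagm \<sigma> ** transpose U)) = trace ((diagm \<sigma> ** transpose U) ** U)"
    by (rule trace_mul_sym)
  also have "\<dots> = trace (diagm \<sigma>)"
    using assms by (simp flip: matrix_mul_assoc)
  finally show ?thesis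
    by (simp add: matrix_mul_assoc trace_def diagm_def)
qed

lemma conjugate_diagm_eigenvector:
  fixes u :: "'n \<Rightarrow> real^'n"
  assumes "orthonormal_on UNIV u"
  shows "(matrix_of_columns u ** diagm \<sigma> ** transpose (matrix_of_columns u)) *v u p
    = \<sigma> $ p *\<^sub>R u p"
proof -
  let ?U = "matrix_of_columns u"
  have "(?U ** diagm \<sigma> ** transpose ?U) ** ?U = ?U ** diagm \<sigma>"
    using orthonormal_basis_matrix(1)[OF assms] by (simp flip: matrix_mul_assoc)
  then have "column p ((?U ** diagm \<sigma> ** transpose ?U) ** ?U) = \<sigma> $ p *\<^sub>R u p"
    by (simp add: column_mult_diagm)
  then show ?thesis
    by (simp add: column_matrix_mult)
qed

lemma psd_sqrt_eigenvector:
  fixes S :: "real^'n^'n"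
  assumes sym: "transpose S = S" and psd: "\<forall>x. 0 \<le> inner x (S *v x)"
    and eigen: "(S ** S) *v u = (r * r) *\<^sub>R u" and "0 \<le> r"
  shows "S *v u = r *\<^sub>R u"
proof (cases "r = 0")
  case True
  have "inner (S *v u) (S *v u) = inner u ((S ** S) *v u)"
    using sym by (simp add: inner_matrix_vector_mult_both)
  then show ?thesis
    using True eigen by simp
next
  case False
  define w where "w = S *v u - r *\<^sub>R u"
  have "S *v w = - r *\<^sub>R w"
    using eigen by (simp add: w_def matrix_vector_mult_diff_distrib matrix_vector_mult_scaleR
        matrix_vector_mul_assoc algebra_simps)
  then have "0 \<le> - r * inner w w"
    using psd by (metis inner_scaleR_right)
  then have "inner w w \<le> 0"
    using False \<open>0 \<le> r\<close> by (simp add: mult_le_0_iff)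
  then have "inner w w = 0"
    by (intro order.antisym) simp_all
  then show ?thesis
    by (simp add: w_def)
qed

definition right_singular_basis :: "real^'k^'d \<Rightarrow> ('k \<Rightarrow> real^'k) \<Rightarrow> real^'k \<Rightarrow> bool" where
  "right_singular_basis Y u \<sigma> \<longleftrightarrow> orthonormal_on UNIV u \<and> (\<forall>p. 0 \<le> \<sigma> $ p)
     \<and> (\<forall>p. (transpose Y ** Y) *v u p = (\<sigma> $ p * \<sigma> $ p) *\<^sub>R u p)"

lemma inner_right_singular_basis:
  assumes "right_singular_basis Y u \<sigma>"
  shows "inner (Y *v u p) (Y *v u q) = (if p = q then \<sigma> $ p * \<sigma> $ p else 0)"
  unfolding inner_matrix_vector_mult_both
  using assms by (auto simp: right_singular_basis_def orthonormal_on_def)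

lemma norm_right_singular_basis:
  assumes "right_singular_basis Y u \<sigma>"
  shows "norm (Y *v u p) = \<sigma> $ p"
  using inner_right_singular_basis[OF assms, of p p] assms
  by (simp add: norm_eq_sqrt_inner right_singular_basis_def)

lemma right_singular_basis_exists:
  fixes Y :: "real^'k^'d"
  shows "\<exists>u \<sigma>. right_singular_basis Y u \<sigma>"
proof -
  have sym: "transpose (transpose Y ** Y) = transpose Y ** Y"
    by (simp add: matrix_transpose_mul)
  obtain u and \<mu> :: "real^'k"
    where u: "orthonormal_on UNIV u" "\<And>p. (transpose Y ** Y) *v u p = \<mu> $ p *\<^sub>R u p"
    using symmetric_matrix_orthonormal_eigenbasis[OF sym] by metis
  have "\<mu> $ p = inner (Y *v u p) (Y *v u p)" for p
    using u by (simp add: inner_matrix_vector_mult_both orthonormal_on_def)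
  then have "0 \<le> \<mu> $ p" for p
    by simp
  then have "right_singular_basis Y u (\<chi> p. sqrt (\<mu> $ p))"
    using u by (simp add: right_singular_basis_def)
  then show ?thesis
    by blast
qed

lemma nuclear_norm_eq_sum_singular_values:
  assumes "right_singular_basis Y u \<sigma>"
  shows "nuclear_norm Y = (\<Sum>p\<in>UNIV. \<sigma> $ p)"
proof -
  let ?U = "matrix_of_columns u"
  define S where "S = ?U ** diagm \<sigma> ** transpose ?U"
  have u: "orthonormal_on UNIV u" and \<sigma>: "\<forall>p. 0 \<le> \<sigma> $ p"
    and eigen: "\<And>p. (transpose Y ** Y) *v u p = (\<sigma> $ p * \<sigma> $ p) *\<^sub>R u p"
    using assms by (auto simp: right_singular_basis_def)
  have S_eigen: "S *v u p = \<sigma> $ p *\<^sub>R u p" for p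
    unfolding S_def using u by (rule conjugate_diagm_eigenvector)
  have "transpose S = S"
    by (simp add: S_def matrix_transpose_mul matrix_mul_assoc)
  moreover have "\<forall>x. 0 \<le> inner x (S *v x)"
    unfolding S_def using \<sigma> by (blast intro: conjugate_diagm_psd)
  moreover have "S ** S = transpose Y ** Y"
  proof (rule matrix_eq_on_orthonormal_basis[OF u])
    fix p
    have "(S ** S) *v u p = S *v (S *v u p)"
      by (simp add: matrix_vector_mul_assoc)
    also have "\<dots> = (transpose Y ** Y) *v u p"
      by (simp add: S_eigen eigen matrix_vector_mult_scaleR)
    finally show "(S ** S) *v u p = (transpose Y ** Y) *v u p" .
  qed
  moreover have "S' = S"
    if "transpose S' = S'" "\<forall>x. 0 \<le> inner x (S' *v x)" "S' ** S' = transpose Y ** Y" for S'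
    using u by (rule matrix_eq_on_orthonormal_basis)
      (simp add: S_eigen psd_sqrt_eigenvector that eigen \<sigma>)
  ultimately have "(THE S. transpose S = S \<and> (\<forall>x. 0 \<le> inner x (S *v x))
      \<and> S ** S = transpose Y ** Y) = S"
    by (intro the_equality) blast+
  then show ?thesis
    unfolding nuclear_norm_def S_def
    using trace_conjugate_diagm orthonormal_basis_matrix(1)[OF u] by simp
qed

lemma stiefel_mult_orthogonal:
  assumes "X \<in> stiefel" "R \<in> stiefel"
  shows "X ** (R :: real^'k^'k) \<in> stiefel"
proof -
  have "transpose (X ** R) ** (X ** R) = transpose R ** (transpose X ** X) ** R"
    by (simp add: matrix_transpose_mul matrix_mul_assoc)
  then show ?thesis
    using assms by (simp add: stiefel_def)
qed

lemma inner_stiefel_le_nuclear_norm: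
  fixes Y :: "real^'k^'d"
  assumes "Z \<in> stiefel"
  shows "inner Z Y \<le> nuclear_norm Y"
proof -
  obtain u \<sigma> where us: "right_singular_basis Y u \<sigma>"
    using right_singular_basis_exists by metis
  then have u: "orthonormal_on UNIV u"
    by (simp add: right_singular_basis_def)
  have "inner Z Y = (\<Sum>p\<in>UNIV. inner (Z *v u p) (Y *v u p))"
    using u by (rule inner_matrix_orthonormal_basis)
  also have "\<dots> \<le> (\<Sum>p\<in>UNIV. norm (Z *v u p) * norm (Y *v u p))"
    by (intro sum_mono norm_cauchy_schwarz)
  also have "\<dots> = (\<Sum>p\<in>UNIV. \<sigma> $ p)"
  proof -
    have "norm (u p) = 1" for p
      using u by (simp add: norm_eq_1 orthonormal_on_def)
    then show ?thesis
      by (simp add: norm_right_singular_basis[OF us] norm_stiefel_mult[OF assms])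
  qed
  also have "\<dots> = nuclear_norm Y"
    by (simp add: nuclear_norm_eq_sum_singular_values[OF us])
  finally show ?thesis .
qed

lemma nuclear_norm_attained_on_stiefel:
  fixes Y :: "real^'k^'d"
  assumes "CARD('k) \<le> CARD('d)"
  obtains Z where "Z \<in> stiefel" "inner Z Y = nuclear_norm Y"
proof -
  obtain u \<sigma> where us: "right_singular_basis Y u \<sigma>"
    using right_singular_basis_exists by metis
  then have u: "orthonormal_on UNIV u"
    by (simp add: right_singular_basis_def)
  define w where "w p = (1 / \<sigma> $ p) *\<^sub>R (Y *v u p)" for p
  have "orthonormal_on {p. \<sigma> $ p \<noteq> 0} w"
    unfolding orthonormal_on_def
  proof (intro ballI)
    fix p q
    assume "p \<in> {p. \<sigma> $ p \<noteq> 0}" "q \<in> {p. \<sigma> $ p \<noteq> 0}"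
    then show "inner (w p) (w q) = (if p = q then 1 else 0)"
      using inner_right_singular_basis[OF us, of p q] by (simp add: w_def)
  qed
  then obtain w' where w': "\<forall>p\<in>{p. \<sigma> $ p \<noteq> 0}. w' p = w p" "orthonormal_on UNIV w'"
    by (rule orthonormal_on_extend[OF assms])
  define Z where "Z = matrix_of_columns w' ** transpose (matrix_of_columns u)"
  have "transpose (matrix_of_columns u) \<in> stiefel"
    using orthonormal_basis_matrix(2)[OF u] by (simp add: stiefel_def)
  then have "Z \<in> stiefel"
    using w'(2) by (simp add: Z_def stiefel_mult_orthogonal)
  have Z_u: "Z *v u p = w' p" for p
  proof -
    have "Z ** matrix_of_columns u = matrix_of_columns w'"
      using orthonormal_basis_matrix(1)[OF u] by (simp add: Z_def flip: matrix_mul_assoc)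
    then have "column p (Z ** matrix_of_columns u) = w' p"
      by simp
    then show ?thesis
      by (simp add: column_matrix_mult)
  qed
  have "inner (w' p) (Y *v u p) = \<sigma> $ p" for p
  proof (cases "\<sigma> $ p = 0")
    case True
    then show ?thesis
      using norm_right_singular_basis[OF us, of p] by simp
  next
    case False
    then show ?thesis
      using w'(1) inner_right_singular_basis[OF us, of p p] by (simp add: w_def)
  qed
  then have "inner Z Y = nuclear_norm Y"
    by (simp add: inner_matrix_orthonormal_basis[OF u] Z_u
        nuclear_norm_eq_sum_singular_values[OF us])
  with \<open>Z \<in> stiefel\<close> show ?thesis
    by (rule that)
qed

lemma proj_stiefel_iff_max_inner:
  fixes X Y :: "real^'k^'d"
  assumes "X \<in> stiefel"
  shows "X \<in> proj_stiefel Y \<longleftrightarrow> (\<forall>Z\<in>stiefel. inner Z Y \<le> inner X Y)"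
proof -
  have dist: "inner (Y - Z) (Y - Z) = inner Y Y - 2 * inner Z Y + real CARD('k)"
    if "Z \<in> stiefel" for Z
    using inner_stiefel_self[OF that]
    by (simp add: inner_diff_left inner_diff_right inner_commute)
  have "norm (Y - X) \<le> norm (Y - Z) \<longleftrightarrow> inner Z Y \<le> inner X Y" if "Z \<in> stiefel" for Z
    unfolding norm_le dist[OF assms] dist[OF that] by linarith
  then show ?thesis
    using assms by (auto simp: proj_stiefel_def)
qed

lemma proj_stiefel_iff_inner_eq_nuclear_norm:
  fixes X Y :: "real^'k^'d"
  assumes "CARD('k) \<le> CARD('d)" "X \<in> stiefel"
  shows "X \<in> proj_stiefel Y \<longleftrightarrow> inner X Y = nuclear_norm Y"
proof -
  obtain Z where "Z \<in> stiefel" "inner Z Y = nuclear_norm Y"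
    using nuclear_norm_attained_on_stiefel[OF assms(1)] by metis
  then show ?thesis
    unfolding proj_stiefel_iff_max_inner[OF assms(2)]
    using inner_stiefel_le_nuclear_norm assms(2) by (metis order.antisym order.refl)
qed

lemma sin_coeff_zero_if_cos_sin_le_0:
  fixes a b :: real
  assumes "\<And>t. (cos t - 1) * a + sin t * b \<le> 0"
  shows "b = 0"
proof -
  have "DERIV (\<lambda>t. (cos t - 1) * a + sin t * b) 0 :> b"
    by (auto intro!: derivative_eq_intros)
  then show ?thesis
    by (rule DERIV_local_max[where d = 1]) (use assms in auto)
qed

lemma stiefel_max_inner_columns:
  fixes X M :: "real^'k^'d"
  assumes "\<forall>Z\<in>stiefel. inner Z M \<le> inner X M" "orthonormal_on UNIV z"
  shows "(\<Sum>p\<in>UNIV. inner (z p - column p X) (column p M)) \<le> 0"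
proof -
  have "inner (matrix_of_columns z) M \<le> inner X M"
    using assms by simp
  then show ?thesis
    by (simp add: inner_matrix_columns inner_diff_left sum_subtractf)
qed

lemma stiefel_max_inner_symmetric:
  fixes X M :: "real^'k^'d"
  assumes X: "X \<in> stiefel" and max: "\<forall>Z\<in>stiefel. inner Z M \<le> inner X M"
  shows "transpose (transpose X ** M) = transpose X ** M"
proof -
  define x where "x p = column p X" for p
  define m where "m p = column p M" for p
  have x: "inner (x p) (x q) = (if p = q then 1 else 0)" for p q
    using X by (simp add: stiefel_iff_orthonormal_columns orthonormal_on_def x_def)
  have "inner (x i) (m j) = inner (x j) (m i)" if "i \<noteq> j" for i j
  proof -
    have "(cos t - 1) * (inner (x i) (m i) + inner (x j) (m j))
        + sin t * (inner (x j) (m i) - inner (x i) (m j)) \<le> 0" for t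
    proof -
      define z where "z = x(i := cos t *\<^sub>R x i + sin t *\<^sub>R x j, j := cos t *\<^sub>R x j - sin t *\<^sub>R x i)"
      have "cos t * cos t + sin t * sin t = 1"
        using sin_cos_squared_add[of t] by (simp add: power2_eq_square add.commute)
      then have "orthonormal_on UNIV z"
        using that by (auto simp: orthonormal_on_def z_def x inner_add_left inner_add_right
            inner_diff_left inner_diff_right algebra_simps)
      then have "(\<Sum>p\<in>UNIV. inner (z p - x p) (m p)) \<le> 0"
        using stiefel_max_inner_columns[OF max] by (simp add: x_def m_def)
      moreover have "(\<Sum>p\<in>UNIV. inner (z p - x p) (m p))
          = (\<Sum>p\<in>{i, j}. inner (z p - x p) (m p))"
        by (rule sum.mono_neutral_right) (auto simp: z_def)
      ultimately show ?thesis
        using that by (simp add: z_def inner_add_left inner_diff_left algebra_simps)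
    qed
    then have "inner (x j) (m i) - inner (x i) (m j) = 0"
      by (rule sin_coeff_zero_if_cos_sin_le_0)
    then show ?thesis
      by simp
  qed
  then have "(transpose X ** M) $ q $ p = (transpose X ** M) $ p $ q" for p q
    by (cases "p = q") (simp_all add: transpose_mult_nth x_def m_def)
  then show ?thesis
    by (simp add: vec_eq_iff transpose_def[of "transpose X ** M"])
qed

lemma stiefel_max_inner_range:
  fixes X M :: "real^'k^'d"
  assumes X: "X \<in> stiefel" and max: "\<forall>Z\<in>stiefel. inner Z M \<le> inner X M"
  shows "X ** (transpose X ** M) = M"
proof (rule matrix_eq_columnsI)
  fix j
  define x where "x p = column p X" for p
  define m where "m = column j M"
  have x: "inner (x p) (x q) = (if p = q then 1 else 0)" for p q
    using X by (simp add: stiefel_iff_orthonormal_columns orthonormal_on_def x_def)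
  have first_order: "inner v m = 0" if v: "norm v = 1" "\<forall>q. inner (x q) v = 0" for v
  proof -
    have "(cos t - 1) * inner (x j) m + sin t * inner v m \<le> 0" for t
    proof -
      define z where "z = x(j := cos t *\<^sub>R x j + sin t *\<^sub>R v)"
      have "cos t * cos t + sin t * sin t = 1"
        using sin_cos_squared_add[of t] by (simp add: power2_eq_square add.commute)
      moreover have "inner v v = 1"
        using v(1) by (simp add: norm_eq_1)
      ultimately have "orthonormal_on UNIV z"
        using v(2) by (auto simp: orthonormal_on_def z_def x inner_add_left inner_add_right
            inner_commute algebra_simps)
      then have "(\<Sum>p\<in>UNIV. inner (z p - x p) (column p M)) \<le> 0"
        using stiefel_max_inner_columns[OF max] by (simp add: x_def)
      moreover have "(\<Sum>p\<in>UNIV. inner (z p - x p) (column p M))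
          = (\<Sum>p\<in>{j}. inner (z p - x p) (column p M))"
        by (rule sum.mono_neutral_right) (auto simp: z_def)
      ultimately show ?thesis
        by (simp add: z_def m_def inner_add_left inner_diff_left algebra_simps)
    qed
    then show ?thesis
      by (rule sin_coeff_zero_if_cos_sin_le_0)
  qed
  define r where "r = m - X *v (transpose X *v m)"
  have "transpose X *v (X *v y) = y" for y
    using X by (simp add: matrix_vector_mul_assoc stiefel_def del: transpose_matrix_vector)
  then have "transpose X *v r = 0"
    by (simp add: r_def matrix_vector_mult_diff_distrib del: transpose_matrix_vector)
  then have r_perp: "inner r (X *v y) = 0" for y
    by (metis inner_matrix_vector_transpose inner_zero_left)
  have "inner r m = 0"
  proof (cases "r = 0")
    case False
    have "\<forall>q. inner (x q) (r /\<^sub>R norm r) = 0"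
      using r_perp by (simp add: x_def inner_commute flip: matrix_vector_mult_basis)
    then show ?thesis
      using first_order[of "r /\<^sub>R norm r"] False by simp
  qed simp
  moreover have "inner r m = inner r r + inner r (X *v (transpose X *v m))"
    by (simp add: r_def flip: inner_add_right)
  ultimately have "r = 0"
    using r_perp by simp
  then show "column j (X ** (transpose X ** M)) = column j M"
    by (simp add: r_def m_def column_matrix_mult)
qed

lemma inner_tangent_mult_symmetric:
  fixes X V :: "real^'k^'d" and S :: "real^'k^'k"
  assumes "transpose X ** V + transpose V ** X = 0" "transpose S = S"
  shows "inner V (X ** S) = 0"
proof -
  let ?W = "transpose V ** X"
  have "trace (?W ** S) = trace (transpose (?W ** S))"
    by (simp add: trace_transpose)
  also have "\<dots> = trace (transpose ?W ** S)"
    using assms(2) by (simp add: matrix_transpose_mul trace_mul_sym[of S])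
  finally have "2 * trace (?W ** S) = trace ((?W + transpose ?W) ** S)"
    by (simp add: matrix_add_rdistrib trace_add)
  also have "\<dots> = 0"
    using assms(1) by (simp add: matrix_transpose_mul add.commute trace_def)
  finally show ?thesis
    by (simp add: inner_matrix_eq_trace matrix_mul_assoc)
qed

lemma stiefel_max_inner_normal:
  fixes X M :: "real^'k^'d"
  assumes "X \<in> stiefel" "\<forall>Z\<in>stiefel. inner Z M \<le> inner X M"
    and "transpose X ** V + transpose V ** X = 0"
  shows "inner V M = 0"
  using inner_tangent_mult_symmetric[OF assms(3) stiefel_max_inner_symmetric[OF assms(1,2)]]
  by (simp add: stiefel_max_inner_range[OF assms(1,2)])

lemma stiefel_critical_quadratic_form:
  fixes X :: "real^'k^'d" and B :: "real^'d^'d" and D :: "real^'k^'k"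
  assumes X: "X \<in> stiefel" and B: "transpose B = B" and D: "transpose D = D"
    and normal: "\<And>V. transpose X ** V + transpose V ** X = 0 \<Longrightarrow> inner V (B ** X ** D) = 0"
  shows "stiefel_critical (\<lambda>Y. inner Y (B ** Y ** D)) X"
proof -
  let ?L = "\<lambda>Y. B ** Y ** D"
  have "linear ?L"
    by (rule linearI) (simp_all add: matrix_add_ldistrib matrix_add_rdistrib matrix_scalar_ac
        scalar_matrix_assoc)
  then have "(?L has_derivative ?L) (at X)"
    by (simp add: linear_conv_bounded_linear
        bounded_linear.has_derivative[OF _ has_derivative_ident])
  then have deriv:
    "((\<lambda>Y. inner Y (?L Y)) has_derivative (\<lambda>H. inner X (?L H) + inner H (?L X))) (at X)"
    by (rule has_derivative_inner[OF has_derivative_ident])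
  have "inner X (?L H) = inner H (?L X)" for H
  proof -
    have "inner X (?L H) = inner (X ** transpose D) (B ** H)"
      by (rule inner_matrix_mult_right)
    also have "\<dots> = inner (transpose B ** (X ** transpose D)) H"
      by (rule inner_matrix_mult_left)
    finally show ?thesis
      by (simp add: B D matrix_mul_assoc inner_commute)
  qed
  then show ?thesis
    unfolding stiefel_critical_def using X deriv normal by auto
qed

theorem lemma7:
  fixes Q :: "real^('k::{finite,linorder})^('d::finite)"
    and lam a :: "real^('k::{finite,linorder})" and \<alpha> :: real and X :: "real^('k::{finite,linorder})^('d::finite)"
    and \<Theta> :: "real^('k::{finite,linorder})^('k::{finite,linorder})"
    and \<A> :: "real^('k::{finite,linorder})^('d::finite) \<Rightarrow> real^('k::{finite,linorder})^('d::finite)"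
  assumes dK: "CARD('k) < CARD('d)"
    and Q: "Q \<in> stiefel"
    and lam_dec: "\<forall>i j. i < j \<longrightarrow> lam $ j < lam $ i"
    and lam_pos: "\<forall>i. 0 < lam $ i"
    and a_dec: "\<forall>i j. i < j \<longrightarrow> a $ j < a $ i"
    and a_pos: "\<forall>i. 0 < a $ i"
    and alpha: "0 < \<alpha>"
    and X: "X \<in> stiefel"
    and Theta: "\<Theta> = diagm (\<chi> i. sqrt (lam $ i))"
    and A: "\<A> = (\<lambda>Y. \<alpha> *\<^sub>R Y + Q ** \<Theta> ** \<Theta> ** transpose Q ** Y ** diagm a)"
  shows "(X \<in> proj_stiefel (\<A> X) \<longleftrightarrow> trace (transpose X ** \<A> X) = nuclear_norm (\<A> X))
       \<and> (X \<in> proj_stiefel (\<A> X) \<longrightarrow>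
            stiefel_critical (\<lambda>Y. trace (transpose Y ** Q ** \<Theta> ** \<Theta> ** transpose Q ** Y ** diagm a)) X)"
proof -
  let ?B = "Q ** \<Theta> ** \<Theta> ** transpose Q"
  have B: "transpose ?B = ?B"
    by (simp add: Theta matrix_transpose_mul matrix_mul_assoc)
  have f: "(\<lambda>Y. trace (transpose Y ** Q ** \<Theta> ** \<Theta> ** transpose Q ** Y ** diagm a))
      = (\<lambda>Y. inner Y (?B ** Y ** diagm a))"
    by (simp add: inner_matrix_eq_trace matrix_mul_assoc)
  have proj: "X \<in> proj_stiefel (\<A> X) \<longleftrightarrow> inner X (\<A> X) = nuclear_norm (\<A> X)"
    using dK X by (intro proj_stiefel_iff_inner_eq_nuclear_norm) auto
  have "stiefel_critical (\<lambda>Y. inner Y (?B ** Y ** diagm a)) X" if "X \<in> proj_stiefel (\<A> X)"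
  proof (rule stiefel_critical_quadratic_form[OF X B transpose_diagm])
    fix V
    assume tangent: "transpose X ** V + transpose V ** X = 0"
    have "inner V (\<A> X) = 0"
      using that X tangent
      by (intro stiefel_max_inner_normal) (auto simp: proj_stiefel_iff_max_inner)
    moreover have "inner V X = 0"
      using inner_tangent_mult_symmetric[OF tangent, of "mat 1"] by simp
    ultimately show "inner V (?B ** X ** diagm a) = 0"
      by (simp add: A inner_add_right)
  qed
  then show ?thesis
    unfolding f inner_matrix_eq_trace[symmetric] using proj by blast
qed

end
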